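(* Let $(\mathfrak{h},[\;,\;],\langle\;,\;\rangle)$ be a Lorentzian nilpotent Lie algebra whose center $\mathrm{Z}(\mathfrak{h})$ is nondegenerate and positive definite, and let $(\mathfrak{g},[\;,\;]_{\mathfrak{g}},\langle\;,\;\rangle_{\mathfrak{g}})$, $(\mathrm{Z}(\mathfrak{h}),\langle\;,\;\rangle_z)$, $\omega$ be as in the context. Suppose that for all $u,v,w\in\mathfrak{g}$, $\omega(\mathrm{ad}_u^*v,w)+\omega(v,\mathrm{ad}_u^*w)=0.$ Then the endomorphism $D:\mathfrak{g}\to\mathfrak{g}$ defined by $\langle Du,v\rangle_{\mathfrak{g}}=\mathrm{tr}(\omega_u^*\circ\omega_v)$ is a derivation of the Lie algebra $(\mathfrak{g},[\;,\;]_{\mathfrak{g}})$.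
   Context: Setting: $\mathfrak{h}$ is a real finite-dimensional nilpotent Lie algebra with a Lorentzian inner product (signature $(1,n-1)$) whose center $\mathrm{Z}(\mathfrak{h})$ is nondegenerate and the inner product restricted to it, denoted $\langle\;,\;\rangle_z$, is positive definite. Put $\mathfrak{g}=\mathrm{Z}(\mathfrak{h})^\perp$ with the restricted (Lorentzian) inner product $\langle\;,\;\rangle_{\mathfrak{g}}$, so $\mathfrak{h}=\mathfrak{g}\oplus\mathrm{Z}(\mathfrak{h})$ orthogonally. For $u,v\in\mathfrak{g}$ write $[u,v]=[u,v]_{\mathfrak{g}}+\omega(u,v)$ with $[u,v]_{\mathfrak{g}}\in\mathfrak{g}$ and $\omega(u,v)\in\mathrm{Z}(\mathfrak{h})$; then $(\mathfrak{g},[\;,\;]_{\mathfrak{g}})$ is a Lie algebra and $\omega$ is a $2$-cocycle: $\omega([u,v]_{\mathfrak{g}},w)+\omega([v,w]_{\mathfrak{g}},u)+\omega([w,u]_{\mathfrak{g}},v)=0$. For $u\in\mathfrak{g}$, $\mathrm{ad}_u:\mathfrak{g}\to\mathfrak{g}$ is $v\mapsto[u,v]_{\mathfrak{g}}$ and $\mathrm{ad}_u^*$ is its adjoint with respect to $\langle\;,\;\rangle_{\mathfrak{g}}$; $\omega_u:\mathfrak{g}\to\mathrm{Z}(\mathfrak{h})$ is $v\mapsto\omega(u,v)$, and $\omega_u^*:\mathrm{Z}(\mathfrak{h})\to\mathfrak{g}$ is defined by $\langle\omega_u^*(x),v\rangle_{\mathfrak{g}}=\langle\omega(u,v),x\rangle_z$.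 *)

theory Defs
  imports "HOL-Analysis.Analysis"
begin

text \<open>Real finite-dimensional vector spaces are modelled by types of class euclidean_space;
  the standard inner product of such a type is used ONLY to define the (basis independent)
  trace of an endomorphism.  All metrics of the paper are separate bilinear forms.\<close>

definition lie_algebra :: "('a::real_vector \<Rightarrow> 'a \<Rightarrow> 'a) \<Rightarrow> bool" where
  "lie_algebra br \<longleftrightarrow> bilinear br \<and> (\<forall>x. br x x = 0) \<and>
     (\<forall>x y z. br x (br y z) + br y (br z x) + br z (br x y) = 0)"

text \<open>Nilpotent: some iterated adjoint product ad_x1 ... ad_xk y always vanishes
  (equivalently the lower central series terminates).\<close>
definition nilpotent_lie :: "('a::real_vector \<Rightarrow> 'a \<Rightarrow> 'a) \<Rightarrow> bool" where
  "nilpotent_lie br \<longleftrightarrow> (\<exists>k. \<forall>xs y. length xs = k \<longrightarrow> foldr br xs y = 0)"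

definition lie_center :: "('a::real_vector \<Rightarrow> 'a \<Rightarrow> 'a) \<Rightarrow> 'a set" where
  "lie_center br = {x. \<forall>y. br x y = 0}"

definition derivation :: "('a::real_vector \<Rightarrow> 'a \<Rightarrow> 'a) \<Rightarrow> ('a \<Rightarrow> 'a) \<Rightarrow> bool" where
  "derivation br D \<longleftrightarrow> linear D \<and> (\<forall>x y. D (br x y) = br (D x) y + br x (D y))"

definition sym_bilinear_form :: "('a::real_vector \<Rightarrow> 'a \<Rightarrow> real) \<Rightarrow> bool" where
  "sym_bilinear_form B \<longleftrightarrow> bilinear B \<and> (\<forall>x y. B x y = B y x)"

definition nondegenerate :: "('a::real_vector \<Rightarrow> 'a \<Rightarrow> real) \<Rightarrow> bool" where
  "nondegenerate B \<longleftrightarrow> (\<forall>x. (\<forall>y. B x y = 0) \<longrightarrow> x = 0)"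

definition positive_definite :: "('a::real_vector \<Rightarrow> 'a \<Rightarrow> real) \<Rightarrow> bool" where
  "positive_definite B \<longleftrightarrow> sym_bilinear_form B \<and> (\<forall>x. x \<noteq> 0 \<longrightarrow> B x x > 0)"

definition negative_definite_on :: "('a::real_vector \<Rightarrow> 'a \<Rightarrow> real) \<Rightarrow> 'a set \<Rightarrow> bool" where
  "negative_definite_on B S \<longleftrightarrow> (\<forall>x\<in>S. x \<noteq> 0 \<longrightarrow> B x x < 0)"

text \<open>Lorentzian = nondegenerate symmetric bilinear form of signature (1, n-1):
  maximal dimension of a negative definite subspace is exactly 1.\<close>
definition lorentzian :: "('a::euclidean_space \<Rightarrow> 'a \<Rightarrow> real) \<Rightarrow> bool" where
  "lorentzian B \<longleftrightarrow> sym_bilinear_form B \<and> nondegenerate B \<and>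
     (\<exists>S. subspace S \<and> dim S = 1 \<and> negative_definite_on B S) \<and>
     (\<forall>S. subspace S \<and> negative_definite_on B S \<longrightarrow> dim S \<le> 1)"

definition adjoint_wrt :: "('a \<Rightarrow> 'a \<Rightarrow> real) \<Rightarrow> ('b \<Rightarrow> 'b \<Rightarrow> real) \<Rightarrow> ('a \<Rightarrow> 'b) \<Rightarrow> 'b \<Rightarrow> 'a" where
  "adjoint_wrt Ba Bb f = (\<lambda>y. THE x. \<forall>v. Ba x v = Bb (f v) y)"

definition lin_trace :: "('a::euclidean_space \<Rightarrow> 'a) \<Rightarrow> real" where
  "lin_trace f = (\<Sum>b\<in>Basis. inner (f b) b)"

text \<open>h = g \<oplus> Z(h) (orthogonal sum), bracket [(u,x),(v,y)] = ([u,v]_g, \<omega>(u,v)).\<close>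
definition ext_bracket :: "('g \<Rightarrow> 'g \<Rightarrow> 'g) \<Rightarrow> ('g \<Rightarrow> 'g \<Rightarrow> 'z) \<Rightarrow> 'g \<times> 'z \<Rightarrow> 'g \<times> 'z \<Rightarrow> 'g \<times> 'z" where
  "ext_bracket brg \<omega> p q = (brg (fst p) (fst q), \<omega> (fst p) (fst q))"

definition sum_form :: "('g \<Rightarrow> 'g \<Rightarrow> real) \<Rightarrow> ('z \<Rightarrow> 'z \<Rightarrow> real) \<Rightarrow> 'g \<times> 'z \<Rightarrow> 'g \<times> 'z \<Rightarrow> real" where
  "sum_form Bg Bz p q = Bg (fst p) (fst q) + Bz (snd p) (snd q)"

end

theory Submission
  imports Defs
begin

text \<open>Write \<open>S\<^sub>u = \<omega>\<^sub>u\<^sup>*\<close>. The cocycle identity yields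
  \<open>S\<^bsub>[u,v]\<^esub> = ad\<^sub>v\<^sup>* \<circ> S\<^sub>u - ad\<^sub>u\<^sup>* \<circ> S\<^sub>v\<close>, so
  \<open>\<langle>D[u,v], w\<rangle> = tr(ad\<^sub>v\<^sup>* S\<^sub>u \<omega>\<^sub>w) - tr(ad\<^sub>u\<^sup>* S\<^sub>v \<omega>\<^sub>w)\<close>.
  Moving \<open>ad\<^sub>v\<^sup>*\<close> cyclically to the right of \<open>\<omega>\<^sub>w\<close> and using the hypothesis in the form
  \<open>\<omega>\<^sub>w \<circ> ad\<^sub>v\<^sup>* = - \<omega>\<^bsub>ad\<^sub>v\<^sup>* w\<^esub>\<close> turns the first trace into
  \<open>-\<langle>Du, ad\<^sub>v\<^sup>* w\<rangle> = \<langle>[Du, v], w\<rangle>\<close>, and likewise the second one into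
  \<open>-\<langle>[u, Dv], w\<rangle>\<close>.\<close>

lemma alternating_bilinear_skew:
  assumes "bilinear f" and "\<And>x. f x x = 0"
  shows "f x y = - f y x"
proof -
  have "0 = f (x + y) (x + y)"
    by (simp add: assms(2))
  also have "\<dots> = f x x + f x y + (f y x + f y y)"
    by (simp add: bilinear_ladd[OF assms(1)] bilinear_radd[OF assms(1)])
  finally have "f x y + f y x = 0"
    by (simp add: assms(2))
  then show ?thesis
    by (simp add: eq_neg_iff_add_eq_0)
qed

lemma nondegenerate_eqI:
  assumes "bilinear B" and "nondegenerate B" and "\<And>v. B x v = B y v"
  shows "x = y"
proof -
  have "\<forall>v. B (x - y) v = 0"
    by (simp add: assms(3) bilinear_lsub[OF assms(1)])
  then show ?thesis
    using assms(2) unfolding nondegenerate_def by auto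
qed

lemma nondegenerate_bilinear_represents:
  fixes B :: "'a::euclidean_space \<Rightarrow> 'a \<Rightarrow> real"
  assumes bl: "bilinear B" and nd: "nondegenerate B" and "linear \<phi>"
  shows "\<exists>!x. \<forall>v. B x v = \<phi> v"
proof -
  have represent: "f v = adjoint f 1 \<bullet> v" if "linear f" for f :: "'a \<Rightarrow> real" and v
    using adjoint_works[OF that, of v 1] by (simp add: inner_commute)
  define M where "M x = adjoint (B x) 1" for x
  have B_M: "B x v = M x \<bullet> v" for x v
    unfolding M_def by (rule represent) (use bl in \<open>simp add: bilinear_def\<close>)
  have "linear M"
    by (rule linearI; subst vector_eq_rdot[symmetric])
      (simp_all add: B_M[symmetric] inner_add_left bilinear_ladd[OF bl] bilinear_lmul[OF bl])
  moreover have "inj M"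
    by (rule injI, rule nondegenerate_eqI[OF bl nd]) (simp add: B_M)
  ultimately obtain x where "M x = adjoint \<phi> 1"
    by (metis linear_injective_imp_surjective surjD)
  then have "\<forall>v. B x v = \<phi> v"
    by (simp add: B_M represent[OF \<open>linear \<phi>\<close>])
  then show ?thesis
    using nondegenerate_eqI[OF bl nd] by metis
qed

lemma adjoint_wrt_eq:
  fixes Ba :: "'a::euclidean_space \<Rightarrow> 'a \<Rightarrow> real"
  assumes "bilinear Ba" and "nondegenerate Ba" and "linear (\<lambda>v. Bb (f v) y)"
  shows "Ba (adjoint_wrt Ba Bb f y) v = Bb (f v) y"
  using theI'[OF nondegenerate_bilinear_represents[OF assms]] unfolding adjoint_wrt_def by blast

lemma nondegenerate_sum_formD:
  assumes "nondegenerate (sum_form Bg Bz)" and "bilinear Bz"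
  shows "nondegenerate Bg"
  unfolding nondegenerate_def
proof (intro allI impI)
  fix x assume "\<forall>y. Bg x y = 0"
  then have "\<forall>q. sum_form Bg Bz (x, 0) q = 0"
    by (simp add: sum_form_def bilinear_lzero[OF assms(2)])
  then show "x = 0"
    using assms(1) unfolding nondegenerate_def by (simp add: zero_prod_def)
qed

lemma lin_trace_diff: "lin_trace (\<lambda>x. f x - g x) = lin_trace f - lin_trace g"
  unfolding lin_trace_def by (simp add: inner_diff_left sum_subtractf)

lemma lin_trace_minus: "lin_trace (\<lambda>x. - f x) = - lin_trace f"
  unfolding lin_trace_def by (simp add: sum_negf)

lemma linear_lin_trace:
  assumes "\<And>x. linear (\<lambda>u. F u x)"
  shows "linear (\<lambda>u. lin_trace (F u))"
proof -
  have "linear (\<lambda>u. F u b \<bullet> b)" for b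
    using linear_compose[OF assms bounded_linear.linear[OF bounded_linear_inner_left]]
    by (simp add: o_def)
  then show ?thesis
    unfolding lin_trace_def by (simp add: linear_compose_sum)
qed

lemma lin_trace_comp_commute:
  fixes A B :: "'a::euclidean_space \<Rightarrow> 'a"
  assumes "linear A" and "linear B"
  shows "lin_trace (A \<circ> B) = lin_trace (B \<circ> A)"
proof -
  have expand: "F (G b) \<bullet> b = (\<Sum>c\<in>Basis. (G b \<bullet> c) * (F c \<bullet> b))"
    if "linear F" for F G :: "'a \<Rightarrow> 'a" and b
  proof -
    have "F (G b) = F (\<Sum>c\<in>Basis. (G b \<bullet> c) *\<^sub>R c)"
      by (simp add: euclidean_representation)
    also have "\<dots> = (\<Sum>c\<in>Basis. (G b \<bullet> c) *\<^sub>R F c)"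
      by (simp add: linear_sum[OF that] linear_scale[OF that])
    finally show ?thesis by (simp add: inner_sum_left)
  qed
  show ?thesis
    unfolding lin_trace_def o_def expand[OF assms(1), of B] expand[OF assms(2), of A]
    by (subst sum.swap) (simp add: mult.commute)
qed

definition lie_cocycle :: "('g::real_vector \<Rightarrow> 'g \<Rightarrow> 'g) \<Rightarrow> ('g \<Rightarrow> 'g \<Rightarrow> 'z::real_vector) \<Rightarrow> bool" where
  "lie_cocycle br \<omega> \<longleftrightarrow> bilinear \<omega> \<and> (\<forall>x. \<omega> x x = 0) \<and>
     (\<forall>x y z. \<omega> (br x y) z + \<omega> (br y z) x + \<omega> (br z x) y = 0)"

lemma bilinear_ext_bracketD:
  assumes "bilinear (ext_bracket br \<omega>)"
  shows "bilinear br" and "bilinear \<omega>"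
proof -
  have E: "ext_bracket br \<omega> (u, 0) (v, 0) = (br u v, \<omega> u v)" for u v
    by (simp add: ext_bracket_def)
  note rules = bilinear_ladd[OF assms, of "(_, 0)" "(_, 0)" "(_, 0)"]
    bilinear_radd[OF assms, of "(_, 0)" "(_, 0)" "(_, 0)"]
    bilinear_lmul[OF assms, of _ "(_, 0)" "(_, 0)"]
    bilinear_rmul[OF assms, of "(_, 0)" _ "(_, 0)"]
  show "bilinear br" "bilinear \<omega>"
    unfolding bilinear_def using rules by (auto intro!: linearI simp: E)
qed

lemma lie_algebra_ext_bracketD:
  assumes "lie_algebra (ext_bracket br \<omega>)"
  shows "lie_algebra br" and "lie_cocycle br \<omega>"
proof -
  let ?E = "ext_bracket br \<omega>"
  have E: "?E (u, a) (v, b) = (br u v, \<omega> u v)" for u v a b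
    by (simp add: ext_bracket_def)
  have bl: "bilinear br" "bilinear \<omega>"
    using assms bilinear_ext_bracketD unfolding lie_algebra_def by blast+
  have "?E (x, 0) (x, 0) = 0" for x
    using assms unfolding lie_algebra_def by blast
  then have alt: "br x x = 0" "\<omega> x x = 0" for x
    by (simp_all add: E zero_prod_def)
  have "?E (x, 0) (?E (y, 0) (z, 0)) + ?E (y, 0) (?E (z, 0) (x, 0)) + ?E (z, 0) (?E (x, 0) (y, 0)) = 0"
    for x y z using assms unfolding lie_algebra_def by blast
  then have jacobi: "br x (br y z) + br y (br z x) + br z (br x y) = 0"
    and jacobi_\<omega>: "\<omega> x (br y z) + \<omega> y (br z x) + \<omega> z (br x y) = 0" for x y z
    by (simp_all add: E zero_prod_def)
  show "lie_algebra br"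
    unfolding lie_algebra_def using bl alt jacobi by blast
  have skew: "\<omega> a b = - \<omega> b a" for a b
    using alternating_bilinear_skew[OF bl(2) alt(2)] .
  have "\<omega> (br x y) z + \<omega> (br y z) x + \<omega> (br z x) y
      = - (\<omega> x (br y z) + \<omega> y (br z x) + \<omega> z (br x y))" for x y z
    by (simp add: skew[of "br x y" z] skew[of "br y z" x] skew[of "br z x" y])
  then show "lie_cocycle br \<omega>"
    unfolding lie_cocycle_def using bl alt jacobi_\<omega> by simp
qed

locale metric_lie_cocycle =
  fixes br :: "'g::euclidean_space \<Rightarrow> 'g \<Rightarrow> 'g"
    and \<omega> :: "'g \<Rightarrow> 'g \<Rightarrow> 'z::real_vector"
    and Bg :: "'g \<Rightarrow> 'g \<Rightarrow> real"
    and Bz :: "'z \<Rightarrow> 'z \<Rightarrow> real"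
  assumes lie: "lie_algebra br"
    and cocycle: "lie_cocycle br \<omega>"
    and sym_Bg: "sym_bilinear_form Bg"
    and nondegenerate_Bg: "nondegenerate Bg"
    and bilinear_Bz: "bilinear Bz"
begin

abbreviation ad_adj :: "'g \<Rightarrow> 'g \<Rightarrow> 'g" where
  "ad_adj u \<equiv> adjoint_wrt Bg Bg (br u)"

abbreviation omega_adj :: "'g \<Rightarrow> 'z \<Rightarrow> 'g" where
  "omega_adj u \<equiv> adjoint_wrt Bg Bz (\<omega> u)"

lemma bilinear_br: "bilinear br"
  using lie by (simp add: lie_algebra_def)

lemma bilinear_\<omega>: "bilinear \<omega>"
  using cocycle by (simp add: lie_cocycle_def)

lemma bilinear_Bg: "bilinear Bg"
  using sym_Bg by (simp add: sym_bilinear_form_def)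

lemma Bg_commute: "Bg x y = Bg y x"
  using sym_Bg by (simp add: sym_bilinear_form_def)

lemma Bg_eqI: "(\<And>v. Bg x v = Bg y v) \<Longrightarrow> x = y"
  by (rule nondegenerate_eqI[OF bilinear_Bg nondegenerate_Bg])

lemma linear_BgI:
  assumes "\<And>v. linear (\<lambda>u. Bg (f u) v)"
  shows "linear f"
  by (rule linearI; rule Bg_eqI)
    (simp_all add: linear_add[OF assms] linear_scale[OF assms]
      bilinear_ladd[OF bilinear_Bg] bilinear_lmul[OF bilinear_Bg])

lemma ad_adj_eq: "Bg (ad_adj u y) v = Bg (br u v) y"
proof (rule adjoint_wrt_eq[OF bilinear_Bg nondegenerate_Bg])
  show "linear (\<lambda>v. Bg (br u v) y)"
    using linear_compose[of "br u" "\<lambda>x. Bg x y"] bilinear_br bilinear_Bg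
    by (simp add: bilinear_def o_def)
qed

lemma omega_adj_eq: "Bg (omega_adj u x) v = Bz (\<omega> u v) x"
proof (rule adjoint_wrt_eq[OF bilinear_Bg nondegenerate_Bg])
  show "linear (\<lambda>v. Bz (\<omega> u v) x)"
    using linear_compose[of "\<omega> u" "\<lambda>z. Bz z x"] bilinear_\<omega> bilinear_Bz
    by (simp add: bilinear_def o_def)
qed

lemma linear_ad_adj: "linear (ad_adj u)"
  by (rule linear_BgI)
    (simp add: ad_adj_eq Bg_commute[of "br u _"] bilinear_def[THEN iffD1, OF bilinear_Bg])

lemma linear_omega_adj: "linear (omega_adj u)"
  by (rule linear_BgI)
    (simp add: omega_adj_eq bilinear_def[THEN iffD1, OF bilinear_Bz])

lemma linear_omega_adj_left: "linear (\<lambda>u. omega_adj u x)"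
proof (rule linear_BgI)
  show "linear (\<lambda>u. Bg (omega_adj u x) v)" for v
    using linear_compose[of "\<lambda>u. \<omega> u v" "\<lambda>z. Bz z x"] bilinear_\<omega> bilinear_Bz
    by (simp add: omega_adj_eq bilinear_def o_def)
qed

lemma cocycle_bracket_left: "\<omega> (br u v) y = \<omega> u (br v y) - \<omega> v (br u y)"
proof -
  have skew: "br a b = - br b a" "\<omega> a b = - \<omega> b a" for a b
    using lie cocycle alternating_bilinear_skew
    unfolding lie_algebra_def lie_cocycle_def by metis+
  have "\<omega> (br u v) y + \<omega> (br v y) u + \<omega> (br y u) v = 0"
    using cocycle by (simp add: lie_cocycle_def)
  then show ?thesis
    by (simp add: skew(2)[of "br v y"] skew(2)[of "br u y"] skew(1)[of y u]
        bilinear_lneg[OF bilinear_\<omega>] algebra_simps)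
qed

lemma omega_adj_bracket:
  "omega_adj (br u v) x = ad_adj v (omega_adj u x) - ad_adj u (omega_adj v x)"
proof (rule Bg_eqI)
  fix y
  have "Bg (omega_adj (br u v) x) y = Bz (\<omega> u (br v y)) x - Bz (\<omega> v (br u y)) x"
    by (simp add: omega_adj_eq cocycle_bracket_left bilinear_lsub[OF bilinear_Bz])
  also have "\<dots> = Bg (br v y) (omega_adj u x) - Bg (br u y) (omega_adj v x)"
    by (simp add: omega_adj_eq Bg_commute[of "br _ y"])
  also have "\<dots> = Bg (ad_adj v (omega_adj u x) - ad_adj u (omega_adj v x)) y"
    by (simp add: ad_adj_eq bilinear_lsub[OF bilinear_Bg])
  finally show "Bg (omega_adj (br u v) x) y = Bg (ad_adj v (omega_adj u x) - ad_adj u (omega_adj v x)) y" .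
qed

lemma lin_trace_ad_adj_comp:
  assumes "\<forall>u v w. \<omega> (ad_adj u v) w + \<omega> v (ad_adj u w) = 0"
  shows "lin_trace (ad_adj v \<circ> (omega_adj u \<circ> \<omega> w))
    = - lin_trace (omega_adj u \<circ> \<omega> (ad_adj v w))"
proof -
  have \<omega>_ad_adj: "\<omega> w (ad_adj v x) = - \<omega> (ad_adj v w) x" for x
    using assms by (simp add: eq_neg_iff_add_eq_0 add.commute)
  have "lin_trace (ad_adj v \<circ> (omega_adj u \<circ> \<omega> w))
      = lin_trace ((omega_adj u \<circ> \<omega> w) \<circ> ad_adj v)"
    using linear_ad_adj linear_omega_adj bilinear_\<omega>
    by (intro lin_trace_comp_commute linear_compose) (auto simp: bilinear_def)
  also have "(omega_adj u \<circ> \<omega> w) \<circ> ad_adj v = (\<lambda>x. - (omega_adj u \<circ> \<omega> (ad_adj v w)) x)"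
    by (simp add: fun_eq_iff \<omega>_ad_adj linear_neg[OF linear_omega_adj])
  finally show ?thesis
    by (simp add: lin_trace_minus o_def)
qed

theorem derivation_trace_form:
  assumes hyp: "\<forall>u v w. \<omega> (ad_adj u v) w + \<omega> v (ad_adj u w) = 0"
    and D: "\<forall>u v. Bg (D u) v = lin_trace (omega_adj u \<circ> \<omega> v)"
  shows "derivation br D"
  unfolding derivation_def
proof (intro conjI allI)
  show "linear D"
  proof (rule linear_BgI)
    show "linear (\<lambda>u. Bg (D u) v)" for v
      unfolding D[rule_format] o_def by (rule linear_lin_trace linear_omega_adj_left)+
  qed
  fix u v
  show "D (br u v) = br (D u) v + br u (D v)"
  proof (rule Bg_eqI)
    fix w
    have "Bg (D (br u v)) w
        = lin_trace (ad_adj v \<circ> (omega_adj u \<circ> \<omega> w)) - lin_trace (ad_adj u \<circ> (omega_adj v \<circ> \<omega> w))"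
      by (simp add: D omega_adj_bracket o_def lin_trace_diff)
    also have "\<dots> = - Bg (D u) (ad_adj v w) + Bg (D v) (ad_adj u w)"
      by (simp add: lin_trace_ad_adj_comp[OF hyp] D)
    also have "\<dots> = - Bg (br v (D u)) w + Bg (br u (D v)) w"
      by (simp add: Bg_commute[of "D _"] ad_adj_eq)
    also have "\<dots> = Bg (br (D u) v + br u (D v)) w"
      using alternating_bilinear_skew[OF bilinear_br, of v "D u"] lie
      by (simp add: lie_algebra_def bilinear_ladd[OF bilinear_Bg] bilinear_lneg[OF bilinear_Bg])
    finally show "Bg (D (br u v)) w = Bg (br (D u) v + br u (D v)) w" .
  qed
qed

end

text \<open>Only the nondegeneracy of \<open>\<langle>,\<rangle>\<^sub>g\<close> is extracted from the Lorentzian hypothesis;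
  nilpotency, the description of the centre and the positivity of \<open>\<langle>,\<rangle>\<^sub>z\<close> are not needed.\<close>

theorem proposition3p1:
  fixes brg :: "'g::euclidean_space \<Rightarrow> 'g \<Rightarrow> 'g"
    and \<omega> :: "'g \<Rightarrow> 'g \<Rightarrow> 'z::euclidean_space"
    and Bg :: "'g \<Rightarrow> 'g \<Rightarrow> real"
    and Bz :: "'z \<Rightarrow> 'z \<Rightarrow> real"
    and D :: "'g \<Rightarrow> 'g"
  assumes lie: "lie_algebra (ext_bracket brg \<omega>)"
    and nilp: "nilpotent_lie (ext_bracket brg \<omega>)"
    and lor: "lorentzian (sum_form Bg Bz)"
    and center: "lie_center (ext_bracket brg \<omega>) = {0} \<times> UNIV"
    and posz: "positive_definite Bz"
    and symg: "sym_bilinear_form Bg"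
    and hyp: "\<forall>u v w. \<omega> (adjoint_wrt Bg Bg (brg u) v) w + \<omega> v (adjoint_wrt Bg Bg (brg u) w) = 0"
    and Ddef: "\<forall>u v. Bg (D u) v = lin_trace (adjoint_wrt Bg Bz (\<omega> u) \<circ> \<omega> v)"
  shows "derivation brg D"
proof -
  have bilinear_Bz: "bilinear Bz"
    using posz by (simp add: positive_definite_def sym_bilinear_form_def)
  have "nondegenerate Bg"
    using lor nondegenerate_sum_formD[OF _ bilinear_Bz] unfolding lorentzian_def by blast
  with lie symg bilinear_Bz interpret metric_lie_cocycle brg \<omega> Bg Bz
    by unfold_locales (simp_all add: lie_algebra_ext_bracketD)
  show ?thesis
    using hyp Ddef by (rule derivation_trace_form)
qed

end
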